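(* Let $P$ be an irreducible positive recurrent stochastic kernel on a countable set $I$ with stationary distribution $\pi$, let $\widetilde{P}$ be a stochastic kernel on a countable set $\widetilde{I}$ and $\Lambda=(\Lambda(\widetilde{x},x):\widetilde{x}\in\widetilde{I},x\in I)$ a stochastic matrix with $\widetilde{P}\Lambda=\Lambda P$. Define the kernel $\underline{P}$ on $I\times\widetilde{I}$ by $$\underline{P}\big((x,\widetilde{x}),(y,\widetilde{y})\big)=\frac{P(x,y)\,\widetilde{P}(\widetilde{x},\widetilde{y})\,\Lambda(\widetilde{y},y)}{(\Lambda P)(\widetilde{x},y)}\,\mathbf{1}\big((\Lambda P)(\widetilde{x},y)>0\big),$$ and let $(X,\widetilde{X})$ be the Markov chain with kernel $\underline{P}$. Fix $\widetilde{\partial}\in\widetilde{I}$. Assume $\widetilde{\mu}$ is a quasi-stationary distribution for the chain $\widetilde{X}$ (with kernel $\widetilde{P}$) with forbidden state $\widetilde{\partial}$. Then the probability measure $$\underline{\mu}(x_0,\widetilde{x}_0)=\widetilde{\mu}(\widetilde{x}_0)\,\Lambda(\widetilde{x}_0,x_0),\qquad (x_0,\widetilde{x}_0)\in I\times(\widetilde{I}\setminus\{\widetilde{\partial}\}),$$ is a quasi-stationary distribution for $(X,\widetilde{X})$ with forbidden set $\underline{\partial}=I\times\{\widetilde{\partial}\}$.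
   Context: For a Markov chain $Y=(Y_n)_{n\ge0}$ on a countable set $J$ with stochastic kernel $Q$ and a nonempty proper subset $K\subset J$ with hitting time $\tau_K=\inf\{n\ge0:Y_n\in K\}$, a probability measure $\mu$ on $J\setminus K$ is a quasi-stationary distribution (q.s.d.) for $Y$ with forbidden set $K$ if $\mathbb{P}_\mu(Y_n=j\mid\tau_K>n)=\mu(j)$ for all $j\in J\setminus K$ and all $n\ge0$; equivalently, there is $\gamma$ with $\sum_{i\in J\setminus K}\mu(i)Q(i,j)=\gamma\mu(j)$ for all $j\in J\setminus K$. $\mathbb{P}_\mu$ is the law of the chain with initial distribution $\mu$. *)

theory Defs
  imports "HOL-Analysis.Analysis"
begin

definition stochastic :: "('a \<Rightarrow> 'b \<Rightarrow> real) \<Rightarrow> bool" where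
  "stochastic Q \<longleftrightarrow> (\<forall>x y. 0 \<le> Q x y) \<and> (\<forall>x. (Q x has_sum 1) UNIV)"

definition mat_mult :: "('a \<Rightarrow> 'b \<Rightarrow> real) \<Rightarrow> ('b \<Rightarrow> 'c \<Rightarrow> real) \<Rightarrow> 'a \<Rightarrow> 'c \<Rightarrow> real" where
  "mat_mult A B x z = (\<Sum>\<^sub>\<infinity>y. A x y * B y z)"

fun mat_pow :: "('a \<Rightarrow> 'a \<Rightarrow> real) \<Rightarrow> nat \<Rightarrow> 'a \<Rightarrow> 'a \<Rightarrow> real" where
  "mat_pow Q 0 = (\<lambda>x y. if x = y then 1 else 0)"
| "mat_pow Q (Suc n) = mat_mult (mat_pow Q n) Q"

definition irreducible_kernel :: "('a \<Rightarrow> 'a \<Rightarrow> real) \<Rightarrow> bool" where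
  "irreducible_kernel Q \<longleftrightarrow> (\<forall>x y. \<exists>n. mat_pow Q n x y > 0)"

text \<open>First passage probabilities: first_passage Q n x y = P_x(first hitting time of y
  at a time >= 1 equals n).\<close>
fun first_passage :: "('a \<Rightarrow> 'a \<Rightarrow> real) \<Rightarrow> nat \<Rightarrow> 'a \<Rightarrow> 'a \<Rightarrow> real" where
  "first_passage Q 0 x y = 0"
| "first_passage Q (Suc 0) x y = Q x y"
| "first_passage Q (Suc (Suc n)) x y =
     (\<Sum>\<^sub>\<infinity>z\<in>-{y}. Q x z * first_passage Q (Suc n) z y)"

definition positive_recurrent :: "('a \<Rightarrow> 'a \<Rightarrow> real) \<Rightarrow> bool" where
  "positive_recurrent Q \<longleftrightarrow>
     (\<forall>x. (\<lambda>n. first_passage Q n x x) sums 1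
        \<and> summable (\<lambda>n. real n * first_passage Q n x x))"

definition stationary_distribution :: "('a \<Rightarrow> 'a \<Rightarrow> real) \<Rightarrow> ('a \<Rightarrow> real) \<Rightarrow> bool" where
  "stationary_distribution Q \<pi> \<longleftrightarrow>
     (\<forall>x. 0 \<le> \<pi> x) \<and> (\<pi> has_sum 1) UNIV \<and> (\<forall>y. (\<Sum>\<^sub>\<infinity>x. \<pi> x * Q x y) = \<pi> y)"

text \<open>Quasi-stationary distribution (eigenvector form, as in the context):
  mu is a probability measure on J - K and mu Q = gamma mu on J - K.\<close>
definition qsd :: "('a \<Rightarrow> 'a \<Rightarrow> real) \<Rightarrow> 'a set \<Rightarrow> ('a \<Rightarrow> real) \<Rightarrow> bool" where
  "qsd Q K \<mu> \<longleftrightarrow>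
     (\<forall>j. 0 \<le> \<mu> j) \<and> (\<forall>j\<in>K. \<mu> j = 0) \<and> (\<mu> has_sum 1) (- K) \<and>
     (\<exists>\<gamma>. \<forall>j\<in>-K. (\<Sum>\<^sub>\<infinity>i\<in>-K. \<mu> i * Q i j) = \<gamma> * \<mu> j)"

definition coupled_kernel ::
  "('i \<Rightarrow> 'i \<Rightarrow> real) \<Rightarrow> ('j \<Rightarrow> 'j \<Rightarrow> real) \<Rightarrow> ('j \<Rightarrow> 'i \<Rightarrow> real)
     \<Rightarrow> ('i \<times> 'j) \<Rightarrow> ('i \<times> 'j) \<Rightarrow> real" where
  "coupled_kernel P Pt \<Lambda> = (\<lambda>(x, xt) (y, yt).
     if mat_mult \<Lambda> P xt y > 0
     then P x y * Pt xt yt * \<Lambda> yt y / mat_mult \<Lambda> P xt y else 0)"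

end

theory Submission
  imports Defs
begin

text \<open>Averaging the coupled kernel over the first coordinate against \<open>\<Lambda>(x\<^sub>t, \<cdot>)\<close> cancels the
  normalisation \<open>(\<Lambda>P)(x\<^sub>t, y)\<close> and leaves \<open>Pt(x\<^sub>t, y\<^sub>t) \<Lambda>(y\<^sub>t, y)\<close>; the intertwining
  \<open>Pt \<Lambda> = \<Lambda> P\<close> guarantees that nothing is lost where the normalisation vanishes.
  Hence the lifted measure \<open>\<mu>(x, x\<^sub>t) = \<mu>\<^sub>t(x\<^sub>t) \<Lambda>(x\<^sub>t, x)\<close> is mapped by the coupled kernel
  to the lift of \<open>\<mu>\<^sub>t Pt\<close>, so the eigenvalue equation of \<open>\<mu>\<^sub>t\<close> lifts with the same \<open>\<gamma>\<close>.\<close>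

lemma has_sum_nonneg_entry_le:
  fixes f :: "'a \<Rightarrow> real"
  assumes "(f has_sum s) A" and "\<And>x. x \<in> A \<Longrightarrow> 0 \<le> f x" and "y \<in> A"
  shows "f y \<le> s"
proof -
  have "(f has_sum f y) {y}"
    using has_sum_finite[of "{y}" f] by simp
  then show ?thesis
    using has_sum_mono2[OF _ assms(1)] assms(2,3) by auto
qed

lemma has_sum_UNIV_times_nonneg:
  fixes f :: "'a \<times> 'b \<Rightarrow> real"
  assumes nonneg: "\<And>x b. b \<in> B \<Longrightarrow> 0 \<le> f (x, b)"
    and inner: "\<And>b. b \<in> B \<Longrightarrow> ((\<lambda>x. f (x, b)) has_sum g b) UNIV"
    and outer: "(g has_sum S) B"
  shows "(f has_sum S) (UNIV \<times> B)"
proof -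
  let ?f' = "\<lambda>(b, x). f (x, b)"
  have "?f' summable_on B \<times> UNIV"
    using inner outer nonneg by (intro summable_on_SigmaI) (auto simp: summable_on_def)
  then have "(?f' has_sum S) (B \<times> UNIV)"
    using inner outer by (intro has_sum_SigmaI) auto
  from has_sum_swap[THEN iffD1, OF this] show ?thesis
    by simp
qed

lemma stochastic_nonneg: "stochastic Q \<Longrightarrow> 0 \<le> Q x y"
  by (simp add: stochastic_def)

lemma stochastic_has_sum: "stochastic Q \<Longrightarrow> (Q x has_sum 1) UNIV"
  by (simp add: stochastic_def)

lemma stochastic_le_one: "stochastic Q \<Longrightarrow> Q x y \<le> 1"
  by (rule has_sum_nonneg_entry_le[OF stochastic_has_sum]) (auto simp: stochastic_nonneg)

lemma summable_on_mult_stochastic: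
  assumes "stochastic Q" and "\<And>x. x \<in> A \<Longrightarrow> 0 \<le> f x" and "f summable_on A"
  shows "(\<lambda>x. f x * Q x y) summable_on A"
  using assms by (intro summable_on_comparison_test[OF assms(3)])
    (auto intro: mult_left_le simp: stochastic_nonneg stochastic_le_one)

lemma stochastic_mat_mult_has_sum:
  assumes "stochastic A" and "stochastic B"
  shows "((\<lambda>y. A x y * B y z) has_sum mat_mult A B x z) UNIV"
proof -
  have "A x summable_on UNIV"
    using stochastic_has_sum[OF assms(1)] by (auto simp: summable_on_def)
  then have "(\<lambda>y. A x y * B y z) summable_on UNIV"
    using assms by (intro summable_on_mult_stochastic) (auto simp: stochastic_nonneg)
  then show ?thesis
    by (simp add: mat_mult_def)
qed

lemma stochastic_le_mat_mult:
  assumes "stochastic A" and "stochastic B"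
  shows "A x y * B y z \<le> mat_mult A B x z"
  using stochastic_mat_mult_has_sum[OF assms] by (rule has_sum_nonneg_entry_le)
    (simp_all add: assms stochastic_nonneg)

lemma coupled_kernel_nonneg:
  assumes "stochastic P" and "stochastic Pt" and "stochastic \<Lambda>"
  shows "0 \<le> coupled_kernel P Pt \<Lambda> u v"
  using assms by (auto simp: coupled_kernel_def stochastic_nonneg split: prod.split)

lemma coupled_kernel_average_has_sum:
  assumes P: "stochastic P" and Pt: "stochastic Pt" and \<Lambda>: "stochastic \<Lambda>"
    and intertwining: "mat_mult Pt \<Lambda> = mat_mult \<Lambda> P"
  shows "((\<lambda>x. \<Lambda> xt x * coupled_kernel P Pt \<Lambda> (x, xt) (y, yt)) has_sum Pt xt yt * \<Lambda> yt y) UNIV"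
proof (cases "mat_mult \<Lambda> P xt y > 0")
  case True
  let ?c = "Pt xt yt * \<Lambda> yt y / mat_mult \<Lambda> P xt y"
  have "((\<lambda>x. ?c * (\<Lambda> xt x * P x y)) has_sum ?c * mat_mult \<Lambda> P xt y) UNIV"
    by (intro has_sum_cmult_right stochastic_mat_mult_has_sum \<Lambda> P)
  then show ?thesis
    using True by (simp add: coupled_kernel_def field_simps)
next
  case False
  have "Pt xt yt * \<Lambda> yt y \<le> mat_mult \<Lambda> P xt y"
    using stochastic_le_mat_mult[OF Pt \<Lambda>] by (simp add: intertwining)
  moreover have "0 \<le> Pt xt yt * \<Lambda> yt y"
    using Pt \<Lambda> by (simp add: stochastic_nonneg)
  ultimately have "Pt xt yt * \<Lambda> yt y = 0"
    using False by linarith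
  then show ?thesis
    using False by (auto simp: coupled_kernel_def)
qed

lemma lifted_measure_has_sum:
  assumes \<Lambda>: "stochastic \<Lambda>"
    and nonneg: "\<And>xt. xt \<in> A \<Longrightarrow> 0 \<le> \<nu> xt" and sum: "(\<nu> has_sum s) A"
  shows "((\<lambda>(x, xt). \<nu> xt * \<Lambda> xt x) has_sum s) (UNIV \<times> A)"
proof (rule has_sum_UNIV_times_nonneg[OF _ _ sum])
  show "((\<lambda>x. (\<lambda>(x, xt). \<nu> xt * \<Lambda> xt x) (x, xt)) has_sum \<nu> xt) UNIV" for xt
    using has_sum_cmult_right[OF stochastic_has_sum[OF \<Lambda>], where c = "\<nu> xt"] by simp
qed (simp add: nonneg \<Lambda> stochastic_nonneg)

lemma lifted_measure_coupled_kernel_has_sum: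
  assumes P: "stochastic P" and Pt: "stochastic Pt" and \<Lambda>: "stochastic \<Lambda>"
    and intertwining: "mat_mult Pt \<Lambda> = mat_mult \<Lambda> P"
    and nonneg: "\<And>xt. xt \<in> A \<Longrightarrow> 0 \<le> \<nu> xt" and summable: "\<nu> summable_on A"
  shows "((\<lambda>(x, xt). \<nu> xt * \<Lambda> xt x * coupled_kernel P Pt \<Lambda> (x, xt) (y, yt))
           has_sum (\<Sum>\<^sub>\<infinity>xt\<in>A. \<nu> xt * Pt xt yt) * \<Lambda> yt y) (UNIV \<times> A)"
proof (rule has_sum_UNIV_times_nonneg)
  show "0 \<le> (\<lambda>(x, xt). \<nu> xt * \<Lambda> xt x * coupled_kernel P Pt \<Lambda> (x, xt) (y, yt)) (x, xt)"
    if "xt \<in> A" for x xt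
    using that nonneg P Pt \<Lambda> by (simp add: stochastic_nonneg coupled_kernel_nonneg)
  show "((\<lambda>x. (\<lambda>(x, xt). \<nu> xt * \<Lambda> xt x * coupled_kernel P Pt \<Lambda> (x, xt) (y, yt)) (x, xt))
          has_sum \<nu> xt * Pt xt yt * \<Lambda> yt y) UNIV" for xt
    using has_sum_cmult_right[OF coupled_kernel_average_has_sum[OF P Pt \<Lambda> intertwining], where c = "\<nu> xt"]
    by (simp add: mult.assoc)
  have "(\<lambda>xt. \<nu> xt * Pt xt yt) summable_on A"
    using Pt nonneg summable by (rule summable_on_mult_stochastic)
  then show "((\<lambda>xt. \<nu> xt * Pt xt yt * \<Lambda> yt y) has_sum (\<Sum>\<^sub>\<infinity>xt\<in>A. \<nu> xt * Pt xt yt) * \<Lambda> yt y) A"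
    by (intro has_sum_cmult_left has_sum_infsum)
qed

lemma qsd_coupled_kernel_lift:
  assumes P: "stochastic P" and Pt: "stochastic Pt" and \<Lambda>: "stochastic \<Lambda>"
    and intertwining: "mat_mult Pt \<Lambda> = mat_mult \<Lambda> P"
    and qsd: "qsd Pt K \<mu>t"
  shows "qsd (coupled_kernel P Pt \<Lambda>) (UNIV \<times> K) (\<lambda>(x, xt). \<mu>t xt * \<Lambda> xt x)"
proof -
  from qsd obtain \<gamma> where nonneg: "\<And>xt. 0 \<le> \<mu>t xt" and vanish: "\<And>xt. xt \<in> K \<Longrightarrow> \<mu>t xt = 0"
    and sum: "(\<mu>t has_sum 1) (- K)"
    and eigen: "\<And>yt. yt \<in> - K \<Longrightarrow> (\<Sum>\<^sub>\<infinity>xt\<in>-K. \<mu>t xt * Pt xt yt) = \<gamma> * \<mu>t yt"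
    unfolding qsd_def by blast
  let ?\<mu> = "\<lambda>(x, xt). \<mu>t xt * \<Lambda> xt x"
  have compl: "- (UNIV \<times> K) = UNIV \<times> - K"
    by auto
  have "(\<Sum>\<^sub>\<infinity>u\<in>UNIV \<times> - K. ?\<mu> u * coupled_kernel P Pt \<Lambda> u v) = \<gamma> * ?\<mu> v"
    if "v \<in> UNIV \<times> - K" for v
  proof (cases v)
    case (Pair y yt)
    have "\<mu>t summable_on - K"
      using sum by (rule has_sum_imp_summable)
    then have "((\<lambda>u. ?\<mu> u * coupled_kernel P Pt \<Lambda> u v)
                 has_sum (\<Sum>\<^sub>\<infinity>xt\<in>-K. \<mu>t xt * Pt xt yt) * \<Lambda> yt y) (UNIV \<times> - K)"
      using lifted_measure_coupled_kernel_has_sum[OF P Pt \<Lambda> intertwining, of "- K" \<mu>t y yt] nonneg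
      by (simp add: Pair case_prod_unfold)
    moreover have "(\<Sum>\<^sub>\<infinity>xt\<in>-K. \<mu>t xt * Pt xt yt) * \<Lambda> yt y = \<gamma> * ?\<mu> v"
      using eigen that by (simp add: Pair)
    ultimately show ?thesis
      by (simp add: infsumI)
  qed
  moreover have "(?\<mu> has_sum 1) (UNIV \<times> - K)"
    using \<Lambda> nonneg sum by (rule lifted_measure_has_sum)
  moreover have "0 \<le> ?\<mu> u" for u
    using nonneg \<Lambda> by (simp add: case_prod_unfold stochastic_nonneg)
  moreover have "?\<mu> u = 0" if "u \<in> UNIV \<times> K" for u
    using vanish that by (auto simp: case_prod_unfold)
  ultimately show ?thesis
    unfolding qsd_def compl by blast
qed

theorem proposition7:
  fixes P :: "'i::countable \<Rightarrow> 'i \<Rightarrow> real"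
    and \<pi> :: "'i \<Rightarrow> real"
    and Pt :: "'j::countable \<Rightarrow> 'j \<Rightarrow> real"
    and \<Lambda> :: "'j \<Rightarrow> 'i \<Rightarrow> real"
    and dt :: 'j
    and \<mu>t :: "'j \<Rightarrow> real"
  assumes "stochastic P" and "irreducible_kernel P" and "positive_recurrent P"
    and "stationary_distribution P \<pi>"
    and "stochastic Pt"
    and "stochastic \<Lambda>"
    and "mat_mult Pt \<Lambda> = mat_mult \<Lambda> P"
    and "UNIV \<noteq> {dt}"
    and "qsd Pt {dt} \<mu>t"
  shows "qsd (coupled_kernel P Pt \<Lambda>) (UNIV \<times> {dt}) (\<lambda>(x0, xt0). \<mu>t xt0 * \<Lambda> xt0 x0)"
  using qsd_coupled_kernel_lift[OF assms(1,5,6,7,9)] .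

end
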